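(* Let $\mathcal{I}$ be finite, $\beta$ a positive integer, and for $\mathbf{Q}\in B(\mathcal{L})$ let $$p^{\beta}(\mathbf{Q})=\log\left(\sum_{S\in\mathcal{P}_{\mathbf{Q}}}\min\{\beta,|S|\}\right).$$ Then $p^\beta$ is an arbitrage-free instance-independent pricing function.
   Context: $\mathcal{I}$ is a set of database instances; queries are deterministic functions on $\mathcal{I}$; a query bundle is a finite tuple of queries from a language $\mathcal{L}$, evaluated componentwise; $B(\mathcal{L})$ is the set of bundles, closed under concatenation $\mathbf{Q}_1,\mathbf{Q}_2$. $\mathcal{P}_{\mathbf{Q}}$ is the partition of $\mathcal{I}$ into the equivalence classes of $D\sim D'\iff\mathbf{Q}(D)=\mathbf{Q}(D')$. An instance-independent pricing function $p$ is arbitrage-free if (i) whenever for all $D',D''\in\mathcal{I}$, $\mathbf{Q}_2(D')=\mathbf{Q}_2(D'')$ implies $\mathbf{Q}_1(D')=\mathbf{Q}_1(D'')$, we have $p(\mathbf{Q}_2)\ge p(\mathbf{Q}_1)$; and (ii) $p(\mathbf{Q}_1,\mathbf{Q}_2)\le p(\mathbf{Q}_1)+p(\mathbf{Q}_2)$ for all bundles. *)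

theory Defs
  imports Main Complex_Main
begin

text \<open>A query bundle is a finite list of queries from the language L (bundles = lists L),
evaluated componentwise; concatenation of bundles is list append.\<close>

definition bundle_eval :: "('i \<Rightarrow> 'o) list \<Rightarrow> 'i \<Rightarrow> 'o list" where
  "bundle_eval Qs D = map (\<lambda>q. q D) Qs"

definition bundle_partition :: "('i \<Rightarrow> 'o) list \<Rightarrow> 'i set set" where
  "bundle_partition Qs = UNIV // {(D, D'). bundle_eval Qs D = bundle_eval Qs D'}"

definition price_beta :: "nat \<Rightarrow> ('i \<Rightarrow> 'o) list \<Rightarrow> real" where
  "price_beta \<beta> Qs = ln (\<Sum>S\<in>bundle_partition Qs. real (min \<beta> (card S)))"

definition arbitrage_free :: "('i \<Rightarrow> 'o) set \<Rightarrow> (('i \<Rightarrow> 'o) list \<Rightarrow> real) \<Rightarrow> bool" where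
  "arbitrage_free L p \<longleftrightarrow>
     (\<forall>Q1\<in>lists L. \<forall>Q2\<in>lists L.
        (\<forall>D' D''. bundle_eval Q2 D' = bundle_eval Q2 D'' \<longrightarrow> bundle_eval Q1 D' = bundle_eval Q1 D'')
        \<longrightarrow> p Q2 \<ge> p Q1) \<and>
     (\<forall>Q1\<in>lists L. \<forall>Q2\<in>lists L. p (Q1 @ Q2) \<le> p Q1 + p Q2)"

end

theory Submission
  imports Defs
begin

text \<open>
Write \<open>N\<^sub>\<beta>(e) = \<Sum>\<^sub>v min \<beta> |e\<^sup>-\<^sup>1(v)|\<close> for the capped count of the classes of an evaluation map
\<open>e\<close>, so that the price is \<open>ln N\<^sub>\<beta>\<close>. If \<open>e\<^sub>1\<close> is determined by \<open>e\<^sub>2\<close>, every class of \<open>e\<^sub>1\<close>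
is a disjoint union of classes of \<open>e\<^sub>2\<close>, and \<open>min \<beta>\<close> is subadditive, so \<open>N\<^sub>\<beta>\<close> grows under
refinement. The classes of a concatenated bundle are the nonempty intersections of
classes of the two parts, and since every nonempty class has capped size at least 1,
\<open>min \<beta> |S \<inter> T| \<le> min \<beta> |S| \<cdot> min \<beta> |T|\<close>; hence \<open>N\<^sub>\<beta>\<close> is submultiplicative and its
logarithm subadditive.
\<close>

definition capped_class_count :: "nat \<Rightarrow> ('i \<Rightarrow> 'x) \<Rightarrow> nat" where
  "capped_class_count \<beta> e = (\<Sum>v\<in>range e. min \<beta> (card (e -` {v})))"

lemma quotient_kernel_eq_fibres:
  "UNIV // {(D, D'). e D = e D'} = (\<lambda>v. e -` {v}) ` range e"
proof -
  have "{(D, D'). e D = e D'} `` {x} = e -` {e x}" for x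
    by auto
  then show ?thesis
    unfolding quotient_def by auto
qed

lemma sum_quotient_kernel:
  "(\<Sum>S\<in>UNIV // {(D, D'). e D = e D'}. g S) = (\<Sum>v\<in>range e. g (e -` {v}))"
proof -
  have "inj_on (\<lambda>v. e -` {v}) (range e)"
    by (auto simp: inj_on_def)
  then show ?thesis
    unfolding quotient_kernel_eq_fibres by (simp add: sum.reindex)
qed

lemma price_beta_eq_ln_capped_class_count:
  "price_beta \<beta> Qs = ln (real (capped_class_count \<beta> (bundle_eval Qs)))"
  unfolding price_beta_def bundle_partition_def capped_class_count_def sum_quotient_kernel
  by simp

lemma card_fibre_pos:
  fixes e :: "'i::finite \<Rightarrow> 'x"
  shows "card (e -` {e D}) > 0"
  using card_gt_0_iff by fastforce

lemma capped_class_count_ge_1: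
  fixes e :: "'i::finite \<Rightarrow> 'x"
  assumes "\<beta> > 0"
  shows "capped_class_count \<beta> e \<ge> 1"
proof -
  fix D :: 'i
  have "min \<beta> (card (e -` {e D})) \<le> capped_class_count \<beta> e"
    unfolding capped_class_count_def by (rule member_le_sum) auto
  with assms card_fibre_pos[of e D] show ?thesis
    by linarith
qed

lemma min_sum_le_sum_min:
  fixes \<beta> :: nat
  assumes "finite V"
  shows "min \<beta> (sum c V) \<le> (\<Sum>v\<in>V. min \<beta> (c v))"
  using assms
proof (induction V rule: finite_induct)
  case (insert x F)
  have "min \<beta> (sum c (insert x F)) = min \<beta> (c x + sum c F)"
    using insert.hyps by simp
  also have "\<dots> \<le> min \<beta> (c x) + min \<beta> (sum c F)"
    by linarith
  also have "\<dots> \<le> (\<Sum>v\<in>insert x F. min \<beta> (c v))"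
    using insert by simp
  finally show ?case .
qed simp

lemma card_fibre_eq_sum_card_finer_fibres:
  fixes e1 :: "'i::finite \<Rightarrow> 'x" and e2 :: "'i \<Rightarrow> 'y"
  assumes factor: "\<And>D. \<phi> (e2 D) = e1 D"
  shows "card (e1 -` {u}) = (\<Sum>v\<in>{v \<in> range e2. \<phi> v = u}. card (e2 -` {v}))"
proof -
  have "card (e1 -` {u}) = (\<Sum>D\<in>e1 -` {u}. 1)"
    by simp
  also have "\<dots> = (\<Sum>v\<in>{v \<in> range e2. \<phi> v = u}. \<Sum>D\<in>{D \<in> e1 -` {u}. e2 D = v}. 1)"
    by (rule sum.group[symmetric]) (auto simp: factor[symmetric])
  also have "\<dots> = (\<Sum>v\<in>{v \<in> range e2. \<phi> v = u}. card (e2 -` {v}))"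
    by (rule sum.cong) (auto simp: factor[symmetric] intro!: arg_cong[where f = card])
  finally show ?thesis .
qed

lemma capped_class_count_mono:
  fixes e1 :: "'i::finite \<Rightarrow> 'x" and e2 :: "'i \<Rightarrow> 'y"
  assumes det: "\<And>D D'. e2 D = e2 D' \<Longrightarrow> e1 D = e1 D'"
  shows "capped_class_count \<beta> e1 \<le> capped_class_count \<beta> e2"
proof -
  define \<phi> where "\<phi> = e1 \<circ> inv e2"
  have factor: "\<phi> (e2 D) = e1 D" for D
    unfolding \<phi>_def by (auto intro: det f_inv_into_f)
  have "capped_class_count \<beta> e1
      = (\<Sum>u\<in>range e1. min \<beta> (\<Sum>v\<in>{v \<in> range e2. \<phi> v = u}. card (e2 -` {v})))"
    unfolding capped_class_count_def card_fibre_eq_sum_card_finer_fibres[where \<phi> = \<phi>, OF factor] ..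
  also have "\<dots> \<le> (\<Sum>u\<in>range e1. \<Sum>v\<in>{v \<in> range e2. \<phi> v = u}. min \<beta> (card (e2 -` {v})))"
    by (intro sum_mono min_sum_le_sum_min) simp
  also have "\<dots> = capped_class_count \<beta> e2"
    unfolding capped_class_count_def by (rule sum.group) (auto simp: factor)
  finally show ?thesis .
qed

lemma capped_class_count_cong:
  fixes e1 :: "'i::finite \<Rightarrow> 'x" and e2 :: "'i \<Rightarrow> 'y"
  assumes "\<And>D D'. e1 D = e1 D' \<longleftrightarrow> e2 D = e2 D'"
  shows "capped_class_count \<beta> e1 = capped_class_count \<beta> e2"
  using assms by (intro antisym capped_class_count_mono) auto

lemma min_card_pair_fibre_le:
  fixes e1 :: "'i::finite \<Rightarrow> 'x" and e2 :: "'i \<Rightarrow> 'y"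
  assumes "\<beta> > 0"
  shows "min \<beta> (card ((\<lambda>D. (e1 D, e2 D)) -` {(u, v)}))
         \<le> min \<beta> (card (e1 -` {u})) * min \<beta> (card (e2 -` {v}))"
proof (cases "v \<in> range e2")
  case True
  then obtain D where "v = e2 D"
    by blast
  with assms card_fibre_pos[of e2 D] have "min \<beta> (card (e2 -` {v})) \<ge> 1"
    by simp
  have "(\<lambda>D. (e1 D, e2 D)) -` {(u, v)} \<subseteq> e1 -` {u}"
    by auto
  then have "card ((\<lambda>D. (e1 D, e2 D)) -` {(u, v)}) \<le> card (e1 -` {u})"
    by (intro card_mono) simp_all
  then have "min \<beta> (card ((\<lambda>D. (e1 D, e2 D)) -` {(u, v)})) \<le> min \<beta> (card (e1 -` {u}))"
    by (rule min.mono[OF order.refl])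
  also have "\<dots> \<le> min \<beta> (card (e1 -` {u})) * min \<beta> (card (e2 -` {v}))"
    using \<open>min \<beta> (card (e2 -` {v})) \<ge> 1\<close> by simp
  finally show ?thesis .
next
  case False
  then have "(\<lambda>D. (e1 D, e2 D)) -` {(u, v)} = {}"
    by auto
  then show ?thesis
    by simp
qed

lemma capped_class_count_pair_le:
  fixes e1 :: "'i::finite \<Rightarrow> 'x" and e2 :: "'i \<Rightarrow> 'y"
  assumes "\<beta> > 0"
  shows "capped_class_count \<beta> (\<lambda>D. (e1 D, e2 D))
         \<le> capped_class_count \<beta> e1 * capped_class_count \<beta> e2"
proof -
  have "capped_class_count \<beta> (\<lambda>D. (e1 D, e2 D))
      \<le> (\<Sum>w\<in>range e1 \<times> range e2. min \<beta> (card ((\<lambda>D. (e1 D, e2 D)) -` {w})))"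
    unfolding capped_class_count_def by (rule sum_mono2) auto
  also have "\<dots> \<le> (\<Sum>w\<in>range e1 \<times> range e2.
                    min \<beta> (card (e1 -` {fst w})) * min \<beta> (card (e2 -` {snd w})))"
  proof (rule sum_mono)
    fix w :: "'x \<times> 'y"
    show "min \<beta> (card ((\<lambda>D. (e1 D, e2 D)) -` {w}))
          \<le> min \<beta> (card (e1 -` {fst w})) * min \<beta> (card (e2 -` {snd w}))"
      using min_card_pair_fibre_le[OF assms, of e1 e2 "fst w" "snd w"] by simp
  qed
  also have "\<dots> = capped_class_count \<beta> e1 * capped_class_count \<beta> e2"
    unfolding capped_class_count_def sum_product sum.cartesian_product by (simp add: case_prod_beta)
  finally show ?thesis .
qed

lemma bundle_eval_append_eq_iff:
  "bundle_eval (Q1 @ Q2) D = bundle_eval (Q1 @ Q2) D'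
   \<longleftrightarrow> (bundle_eval Q1 D, bundle_eval Q2 D) = (bundle_eval Q1 D', bundle_eval Q2 D')"
  by (simp add: bundle_eval_def)

lemma ln_le_ln_add_ln:
  fixes a b c :: nat
  assumes "a \<le> b * c" "a \<ge> 1" "b \<ge> 1" "c \<ge> 1"
  shows "ln (real a) \<le> ln (real b) + ln (real c)"
proof -
  have "ln (real a) \<le> ln (real b * real c)"
    using assms by (subst ln_le_cancel_iff) (simp_all add: of_nat_mult[symmetric] del: of_nat_mult)
  then show ?thesis
    using assms by (simp add: ln_mult)
qed

theorem lemma22:
  fixes L :: "('i::finite \<Rightarrow> 'o) set" and \<beta> :: nat
  assumes "\<beta> > 0"
  shows "arbitrage_free L (price_beta \<beta> :: ('i \<Rightarrow> 'o) list \<Rightarrow> real)"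
  unfolding arbitrage_free_def price_beta_eq_ln_capped_class_count
proof (intro conjI ballI impI)
  fix Q1 Q2 :: "('i \<Rightarrow> 'o) list"
  assume "\<forall>D' D''. bundle_eval Q2 D' = bundle_eval Q2 D'' \<longrightarrow> bundle_eval Q1 D' = bundle_eval Q1 D''"
  then have "capped_class_count \<beta> (bundle_eval Q1) \<le> capped_class_count \<beta> (bundle_eval Q2)"
    by (intro capped_class_count_mono) blast
  with capped_class_count_ge_1[OF assms, of "bundle_eval Q1"]
  show "ln (real (capped_class_count \<beta> (bundle_eval Q1)))
        \<le> ln (real (capped_class_count \<beta> (bundle_eval Q2)))"
    by simp
next
  fix Q1 Q2 :: "('i \<Rightarrow> 'o) list"
  have "capped_class_count \<beta> (bundle_eval (Q1 @ Q2))
      = capped_class_count \<beta> (\<lambda>D. (bundle_eval Q1 D, bundle_eval Q2 D))"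
    by (rule capped_class_count_cong) (rule bundle_eval_append_eq_iff)
  also have "\<dots> \<le> capped_class_count \<beta> (bundle_eval Q1) * capped_class_count \<beta> (bundle_eval Q2)"
    by (rule capped_class_count_pair_le[OF assms])
  finally show "ln (real (capped_class_count \<beta> (bundle_eval (Q1 @ Q2))))
      \<le> ln (real (capped_class_count \<beta> (bundle_eval Q1)))
       + ln (real (capped_class_count \<beta> (bundle_eval Q2)))"
    by (intro ln_le_ln_add_ln capped_class_count_ge_1[OF assms])
qed

end
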